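(* If a Turing degree $\mathbf d$ is loquaciously high for paths, then every $\Pi^1_1$ subset of $\omega$ is c.e. relative to $\mathbf d$, uniformly (given a $\Pi^1_1$ index for the set, one effectively obtains an index of a $\mathbf d$-c.e. enumeration of it).
   Context: Fix a standard effective listing $(T_e:e\in\omega)$ of all computable subtrees of $\omega^{<\omega}$. A degree $\mathbf d$ is loquaciously high for paths if there are $D\in\mathbf d$ and a Turing functional $\Phi$ such that $\Phi^D(e,n)$ converges for all $e,n$, and whenever $T_e$ is ill-founded (has an infinite path), the function $n\mapsto\Phi^D(e,n)$ is an infinite path through $T_e$. *)

theory Defs
  imports Main "HOL-Library.Nat_Bijection"
begin

text \<open>With t = fst (prod_decode e),
  c = snd (prod_decode e):
  t=0 zero; t=1 successor of first argument; t=2 projection onto argument c;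
  t=3 composition (c codes (f, list of g's)); t=4 primitive recursion on the
  first argument (c codes (f,g)); t=5 minimisation of program c;
  t=6 auxiliary search (c codes (f,m)); t=7 oracle query on first argument;
  other codes diverge.  run A k e xs is the result of running program e with
  oracle A on inputs xs using fuel k (None = no convergence within fuel k).\<close>

fun hd0 :: "nat list \<Rightarrow> nat" where
  "hd0 [] = 0"
| "hd0 (x # _) = x"

function run :: "(nat \<Rightarrow> nat) \<Rightarrow> nat \<Rightarrow> nat \<Rightarrow> nat list \<Rightarrow> nat option" where
  "run A 0 e xs = None"
| "run A (Suc k) e xs =
    (let t = fst (prod_decode e); c = snd (prod_decode e) in
     if t = 0 then Some 0
     else if t = 1 then Some (Suc (hd0 xs))
     else if t = 2 then (if c < length xs then Some (xs ! c) else None)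
     else if t = 3 then
       (case those (map (\<lambda>g. run A k g xs) (list_decode (snd (prod_decode c)))) of
          None \<Rightarrow> None
        | Some ys \<Rightarrow> run A k (fst (prod_decode c)) ys)
     else if t = 4 then
       (case xs of
          [] \<Rightarrow> None
        | n # ys \<Rightarrow>
            (if n = 0 then run A k (fst (prod_decode c)) ys
             else (case run A k e ((n - 1) # ys) of
                     None \<Rightarrow> None
                   | Some y \<Rightarrow> run A k (snd (prod_decode c)) (y # (n - 1) # ys))))
     else if t = 5 then run A k (prod_encode (6, prod_encode (c, 0))) xs
     else if t = 6 then
       (case run A k (fst (prod_decode c)) (snd (prod_decode c) # xs) of
          None \<Rightarrow> None
        | Some y \<Rightarrow> (if y = 0 then Some (snd (prod_decode c))
                     else run A k (prod_encode (6, prod_encode (fst (prod_decode c),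
                                     Suc (snd (prod_decode c))))) xs))
     else if t = 7 then Some (A (hd0 xs))
     else None)"
  by pat_completeness auto
termination by (relation "measure (\<lambda>(A, k, e, xs). k)") auto

definition conv :: "(nat \<Rightarrow> nat) \<Rightarrow> nat \<Rightarrow> nat list \<Rightarrow> nat \<Rightarrow> bool" where
  "conv A e xs y \<longleftrightarrow> (\<exists>k. run A k e xs = Some y)"

definition chi :: "nat set \<Rightarrow> nat \<Rightarrow> nat" where
  "chi D n = (if n \<in> D then 1 else 0)"

definition noOracle :: "nat \<Rightarrow> nat" where
  "noOracle n = 0"

definition W :: "nat set \<Rightarrow> nat \<Rightarrow> nat set" where
  "W D e = {x. \<exists>y. conv (chi D) e [x] y}"

definition isPath :: "nat list set \<Rightarrow> (nat \<Rightarrow> nat) \<Rightarrow> bool" where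
  "isPath T f \<longleftrightarrow> (\<forall>n. map f [0..<n] \<in> T)"

definition illFounded :: "nat list set \<Rightarrow> bool" where
  "illFounded T \<longleftrightarrow> (\<exists>f. isPath T f)"

text \<open>Each T_e is a (uniformly) computable tree, and for
  every computable tree T with characteristic function phi_e, T_e has the
  same infinite paths as T.\<close>
definition Tr :: "nat \<Rightarrow> nat list set" where
  "Tr e = {\<sigma>. \<forall>j\<le>length \<sigma>.
             run noOracle (length \<sigma>) e [list_encode (take j \<sigma>)] \<noteq> Some 0}"

definition TrP :: "nat \<Rightarrow> nat \<Rightarrow> nat list set" where
  "TrP e i = {\<sigma>. \<forall>j\<le>length \<sigma>.
             run noOracle (length \<sigma>) e [i, list_encode (take j \<sigma>)] \<noteq> Some 0}"

text \<open>The Pi^1_1 set with index e (Kleene normal form):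
  i belongs to it iff the tree TrP e i is well-founded.\<close>
definition Pi11 :: "nat \<Rightarrow> nat set" where
  "Pi11 e = {i. \<not> illFounded (TrP e i)}"

definition loqHighPaths :: "nat set \<Rightarrow> bool" where
  "loqHighPaths D \<longleftrightarrow>
     (\<exists>\<Phi> (p :: nat \<Rightarrow> nat \<Rightarrow> nat).
        (\<forall>e n. conv (chi D) \<Phi> [e, n] (p e n)) \<and>
        (\<forall>e. illFounded (Tr e) \<longrightarrow> isPath (Tr e) (p e)))"

end

theory Submission
  imports Defs
begin

text \<open>Let \<open>\<Phi>\<^sup>D = p\<close> witness that \<open>D\<close> is loquaciously high for paths. For a \<open>\<Pi>\<^sup>1\<^sub>1\<close> index \<open>e\<close>,
  the tree \<open>TrP e i\<close> has the same paths as the listed tree \<open>Tr g\<close>, where \<open>g\<close> is \<open>e\<close> with first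
  argument fixed to \<open>i\<close>. So \<open>i \<in> Pi11 e\<close> iff \<open>p g\<close> is not a path, iff \<open>e\<close> rejects some
  initial segment of \<open>p g\<close>, i.e. halts on it with output 0. A halting computation has a finite
  certificate, a list of single computation steps each derived from earlier ones, and checking a
  certificate is primitive recursive. Hence \<open>i \<in> Pi11 e\<close> iff some pair (length \<open>j\<close>,
  certificate \<open>C\<close>) passes a check that is primitive recursive in \<open>p\<close>, and the search for such a
  pair is a \<open>D\<close>-computation whose index depends computably on \<open>e\<close>.\<close>

section \<open>Convergence with fuel\<close>

lemma those_map_mono:
  "those (map f xs) = Some ys \<Longrightarrow> (\<And>x y. f x = Some y \<Longrightarrow> g x = Some y) \<Longrightarrow>
   those (map g xs) = Some ys"
  by (induction xs arbitrary: ys) (auto split: option.splits)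

lemma run_mono: "run A k e xs = Some y \<Longrightarrow> k \<le> k' \<Longrightarrow> run A k' e xs = Some y"
proof (induction k arbitrary: k' e xs y)
  case 0
  then show ?case by simp
next
  case (Suc k)
  then obtain k'' where k': "k' = Suc k''" and "k \<le> k''"
    by (cases k') auto
  with Suc.IH have IH: "\<And>e xs y. run A k e xs = Some y \<Longrightarrow> run A k'' e xs = Some y"
    by blast
  show ?case
    using Suc.prems(1) unfolding k'
    by (auto simp: Let_def IH split: if_splits option.splits list.splits
             dest: those_map_mono[where g = "\<lambda>g. run A k'' g xs", OF _ IH])
qed

lemma conv_iff_eventually: "conv A e xs y \<longleftrightarrow> (\<forall>\<^sub>F k in sequentially. run A k e xs = Some y)"
  unfolding conv_def eventually_sequentially by (metis order_refl run_mono)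

lemma conv_SucI: "(\<forall>\<^sub>F k in sequentially. run A (Suc k) e xs = Some y) \<Longrightarrow> conv A e xs y"
  unfolding conv_iff_eventually by (rule eventually_sequentially_Suc[THEN iffD1])

lemma convI: "run A k e xs = Some y \<Longrightarrow> conv A e xs y"
  unfolding conv_def by blast

lemma conv_by_step:
  "conv A e' xs' y' \<Longrightarrow> (\<And>k. run A k e' xs' = Some y' \<Longrightarrow> run A (Suc k) e xs = Some y) \<Longrightarrow>
   conv A e xs y"
  unfolding conv_def by blast

lemma conv_by_step2:
  assumes "conv A e1 xs1 y1" and "conv A e2 xs2 y2"
    and "\<And>k. run A k e1 xs1 = Some y1 \<Longrightarrow> run A k e2 xs2 = Some y2 \<Longrightarrow> run A (Suc k) e xs = Some y"
  shows "conv A e xs y"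
proof -
  obtain k1 k2 where "run A k1 e1 xs1 = Some y1" "run A k2 e2 xs2 = Some y2"
    using assms(1,2) unfolding conv_def by blast
  then have "run A (max k1 k2) e1 xs1 = Some y1" "run A (max k1 k2) e2 xs2 = Some y2"
    by (auto intro: run_mono)
  with assms(3) show ?thesis by (blast intro: convI)
qed

lemma conv_det: "conv A e xs y \<Longrightarrow> conv A e xs y' \<Longrightarrow> y = y'"
  unfolding conv_iff_eventually
proof -
  assume "\<forall>\<^sub>F k in sequentially. run A k e xs = Some y" "\<forall>\<^sub>F k in sequentially. run A k e xs = Some y'"
  then have "\<forall>\<^sub>F k in sequentially. y = y'" by eventually_elim simp
  then show "y = y'" by simp
qed

lemma eventually_those_run:
  "list_all2 (\<lambda>g y. conv A g xs y) gs ys \<Longrightarrow>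
   \<forall>\<^sub>F k in sequentially. those (map (\<lambda>g. run A k g xs) gs) = Some ys"
proof (induction rule: list_all2_induct)
  case (Cons g gs y ys)
  from Cons(1,3) show ?case unfolding conv_iff_eventually by eventually_elim simp
qed simp

abbreviation pair :: "nat \<Rightarrow> nat \<Rightarrow> nat" where "pair a b \<equiv> prod_encode (a, b)"
abbreviation pfst :: "nat \<Rightarrow> nat" where "pfst n \<equiv> fst (prod_decode n)"
abbreviation psnd :: "nat \<Rightarrow> nat" where "psnd n \<equiv> snd (prod_decode n)"

lemmas run_Suc_pair =
  run.simps(2)[of A k "pair t c" for A k t c, unfolded Let_def prod_encode_inverse fst_conv snd_conv]

declare run.simps(2)[simp del]

definition prog_zero :: nat where "prog_zero = pair 0 0"
definition prog_succ :: nat where "prog_succ = pair 1 0"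
definition prog_proj :: "nat \<Rightarrow> nat" where "prog_proj i = pair 2 i"
definition prog_comp :: "nat \<Rightarrow> nat list \<Rightarrow> nat" where "prog_comp f gs = pair 3 (pair f (list_encode gs))"
definition prog_prec :: "nat \<Rightarrow> nat \<Rightarrow> nat" where "prog_prec f g = pair 4 (pair f g)"
definition prog_min :: "nat \<Rightarrow> nat" where "prog_min f = pair 5 f"
definition prog_search :: "nat \<Rightarrow> nat \<Rightarrow> nat" where "prog_search f m = pair 6 (pair f m)"

lemma run_prog_zero [simp]: "run A (Suc k) prog_zero xs = Some 0"
  unfolding prog_zero_def run_Suc_pair prod_encode_inverse fst_conv snd_conv by simp

lemma run_prog_succ [simp]: "run A (Suc k) prog_succ xs = Some (Suc (hd0 xs))"
  unfolding prog_succ_def run_Suc_pair prod_encode_inverse fst_conv snd_conv by simp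

lemma run_prog_proj [simp]:
  "run A (Suc k) (prog_proj i) xs = (if i < length xs then Some (xs ! i) else None)"
  unfolding prog_proj_def run_Suc_pair prod_encode_inverse fst_conv snd_conv by simp

lemma run_prog_comp [simp]:
  "run A (Suc k) (prog_comp f gs) xs =
   (case those (map (\<lambda>g. run A k g xs) gs) of None \<Rightarrow> None | Some ys \<Rightarrow> run A k f ys)"
  unfolding prog_comp_def run_Suc_pair prod_encode_inverse fst_conv snd_conv by simp

lemma run_prog_prec [simp]:
  "run A (Suc k) (prog_prec f g) xs =
   (case xs of
      [] \<Rightarrow> None
    | n # ys \<Rightarrow>
        (if n = 0 then run A k f ys
         else (case run A k (prog_prec f g) ((n - 1) # ys) of
                 None \<Rightarrow> None
               | Some y \<Rightarrow> run A k g (y # (n - 1) # ys))))"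
  unfolding prog_prec_def run_Suc_pair prod_encode_inverse fst_conv snd_conv by simp

lemma run_prog_min [simp]: "run A (Suc k) (prog_min f) xs = run A k (prog_search f 0) xs"
  unfolding prog_min_def prog_search_def run_Suc_pair prod_encode_inverse fst_conv snd_conv by simp

lemma run_prog_search [simp]:
  "run A (Suc k) (prog_search f m) xs =
   (case run A k f (m # xs) of
      None \<Rightarrow> None
    | Some y \<Rightarrow> (if y = 0 then Some m else run A k (prog_search f (Suc m)) xs))"
  unfolding prog_search_def run_Suc_pair prod_encode_inverse fst_conv snd_conv by simp

definition computes :: "(nat \<Rightarrow> nat) \<Rightarrow> nat \<Rightarrow> nat \<Rightarrow> (nat list \<Rightarrow> nat) \<Rightarrow> bool" where
  "computes A p n F \<longleftrightarrow> (\<forall>xs. length xs = n \<longrightarrow> conv A p xs (F xs))"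

lemma conv_prog_comp_intro:
  assumes "conv A f ys y" and "list_all2 (\<lambda>g v. conv A g xs v) gs ys"
  shows "conv A (prog_comp f gs) xs y"
proof (rule conv_SucI)
  from eventually_those_run[OF assms(2)] assms(1)[unfolded conv_iff_eventually]
  show "\<forall>\<^sub>F k in sequentially. run A (Suc k) (prog_comp f gs) xs = Some y"
    by eventually_elim simp
qed

lemma those_run_conv_eq:
  "list_all2 (\<lambda>g y. conv A g xs y) gs ys \<Longrightarrow> those (map (\<lambda>g. run A k g xs) gs) = Some zs \<Longrightarrow>
   zs = ys"
proof (induction arbitrary: zs rule: list_all2_induct)
  case (Cons g gs y ys)
  then show ?case by (auto split: option.splits dest: convI conv_det)
qed simp

lemma conv_prog_comp_elim:
  assumes "conv A (prog_comp f gs) xs y" and "list_all2 (\<lambda>g v. conv A g xs v) gs ys"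
  shows "conv A f ys y"
proof -
  obtain k where k: "run A k (prog_comp f gs) xs = Some y"
    using assms(1) unfolding conv_def by blast
  then obtain k' where "k = Suc k'" by (cases k) auto
  with k obtain zs where "those (map (\<lambda>g. run A k' g xs) gs) = Some zs" and "run A k' f zs = Some y"
    by (auto split: option.splits)
  with those_run_conv_eq[OF assms(2)] show ?thesis by (auto intro: convI)
qed

lemma computes_cong:
  "computes A p n F \<Longrightarrow> (\<And>xs. length xs = n \<Longrightarrow> F xs = G xs) \<Longrightarrow> computes A p n G"
  unfolding computes_def by auto

lemma computes_prog_zero: "computes A prog_zero n (\<lambda>_. 0)"
  unfolding computes_def by (metis convI run_prog_zero)

lemma computes_prog_succ: "computes A prog_succ n (\<lambda>xs. Suc (hd0 xs))"
  unfolding computes_def by (metis convI run_prog_succ)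

lemma computes_prog_proj: "i < n \<Longrightarrow> computes A (prog_proj i) n (\<lambda>xs. xs ! i)"
  unfolding computes_def by (metis convI run_prog_proj)

lemma computes_prog_comp:
  assumes "computes A f m F" and "list_all2 (\<lambda>g G. computes A g n G) gs Gs" and "length gs = m"
  shows "computes A (prog_comp f gs) n (\<lambda>xs. F (map (\<lambda>G. G xs) Gs))"
  unfolding computes_def
proof (intro allI impI)
  fix xs :: "nat list"
  assume "length xs = n"
  with assms(2) have "list_all2 (\<lambda>g y. conv A g xs y) gs (map (\<lambda>G. G xs) Gs)"
    by (auto simp: list_all2_conv_all_nth computes_def)
  moreover have "conv A f (map (\<lambda>G. G xs) Gs) (F (map (\<lambda>G. G xs) Gs))"
    using assms by (auto simp: computes_def dest: list_all2_lengthD)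
  ultimately show "conv A (prog_comp f gs) xs (F (map (\<lambda>G. G xs) Gs))"
    by (rule conv_prog_comp_intro[rotated])
qed

fun prog_const :: "nat \<Rightarrow> nat" where
  "prog_const 0 = prog_zero"
| "prog_const (Suc c) = prog_comp prog_succ [prog_const c]"

lemma computes_prog_const: "computes A (prog_const c) n (\<lambda>_. c)"
proof (induction c)
  case 0
  then show ?case by (simp add: computes_prog_zero)
next
  case (Suc c)
  have "computes A (prog_comp prog_succ [prog_const c]) n
          (\<lambda>xs. (\<lambda>ys. Suc (hd0 ys)) (map (\<lambda>G. G xs) [\<lambda>_. c]))"
    by (rule computes_prog_comp[OF computes_prog_succ]) (use Suc in auto)
  then show ?case by simp
qed

fun natrec :: "nat \<Rightarrow> (nat \<Rightarrow> nat \<Rightarrow> nat) \<Rightarrow> nat \<Rightarrow> nat" where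
  "natrec b s 0 = b"
| "natrec b s (Suc j) = s j (natrec b s j)"

lemma computes_prog_prec:
  assumes f: "computes A f n F" and g: "computes A g (n + 2) G"
  shows "computes A (prog_prec f g) (Suc n)
           (\<lambda>xs. natrec (F (tl xs)) (\<lambda>j r. G (r # j # tl xs)) (hd xs))"
  unfolding computes_def
proof (intro allI impI)
  fix xs :: "nat list"
  assume "length xs = Suc n"
  then obtain v ys where xs: "xs = v # ys" and ys: "length ys = n" by (cases xs) auto
  have "conv A (prog_prec f g) (j # ys) (natrec (F ys) (\<lambda>j r. G (r # j # ys)) j)" for j
  proof (induction j)
    case 0
    have "conv A f ys (F ys)" using f ys by (simp add: computes_def)
    then show ?case by (rule conv_by_step) simp
  next
    case (Suc j)
    let ?r = "natrec (F ys) (\<lambda>j r. G (r # j # ys)) j"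
    have "conv A g (?r # j # ys) (G (?r # j # ys))" using g ys by (simp add: computes_def)
    with Suc show ?case by (rule conv_by_step2) simp
  qed
  then show "conv A (prog_prec f g) xs (natrec (F (tl xs)) (\<lambda>j r. G (r # j # tl xs)) (hd xs))"
    by (simp add: xs)
qed

lemma conv_prog_search:
  assumes c: "computes A c (Suc n) F" and xs: "length xs = n"
    and zero: "F (m0 # xs) = 0" and nonzero: "\<forall>m'. m \<le> m' \<and> m' < m0 \<longrightarrow> F (m' # xs) \<noteq> 0"
    and "m \<le> m0"
  shows "conv A (prog_search c m) xs m0"
  using \<open>m \<le> m0\<close> nonzero
proof (induction "m0 - m" arbitrary: m)
  case 0
  then have "m = m0" by simp
  have "conv A c (m0 # xs) (F (m0 # xs))" using c xs by (simp add: computes_def)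
  then show ?case by (rule conv_by_step) (simp add: \<open>m = m0\<close> zero)
next
  case (Suc d)
  then have "m < m0" by simp
  with Suc.prems(2) have nz: "F (m # xs) \<noteq> 0" by simp
  have "conv A c (m # xs) (F (m # xs))" using c xs by (simp add: computes_def)
  moreover have "conv A (prog_search c (Suc m)) xs m0"
  proof (rule Suc.hyps(1))
    show "d = m0 - Suc m" "Suc m \<le> m0" using Suc.hyps(2) \<open>m < m0\<close> by simp_all
    show "\<forall>m'. Suc m \<le> m' \<and> m' < m0 \<longrightarrow> F (m' # xs) \<noteq> 0" using Suc.prems(2) by simp
  qed
  ultimately show ?case by (rule conv_by_step2) (simp add: nz)
qed

lemma conv_prog_min:
  assumes "computes A c (Suc n) F" and "length xs = n" and "F (m0 # xs) = 0"
  shows "\<exists>y. conv A (prog_min c) xs y"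
proof -
  let ?m = "LEAST m. F (m # xs) = 0"
  have "F (?m # xs) = 0" by (rule LeastI[of _ m0]) (rule assms(3))
  then have "conv A (prog_search c 0) xs ?m"
    using assms(1,2) not_less_Least by (intro conv_prog_search) blast+
  then have "conv A (prog_min c) xs ?m" by (rule conv_by_step) simp
  then show ?thesis ..
qed

lemma run_prog_search_zero:
  assumes "computes A c (Suc n) F" and "length xs = n"
  shows "run A k (prog_search c m) xs = Some y \<Longrightarrow> F (y # xs) = 0"
proof (induction k arbitrary: m)
  case (Suc k)
  have "conv A c (m # xs) (F (m # xs))" using assms by (simp add: computes_def)
  then have "run A k c (m # xs) = Some v \<Longrightarrow> v = F (m # xs)" for v
    by (blast intro: convI conv_det)
  with Suc show ?case by (auto split: option.splits if_splits)
qed simp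

lemma conv_prog_min_zero:
  assumes "computes A c (Suc n) F" and "length xs = n" and "conv A (prog_min c) xs y"
  shows "F (y # xs) = 0"
proof -
  obtain k where k: "run A k (prog_min c) xs = Some y" using assms(3) unfolding conv_def by blast
  then obtain k' where "k = Suc k'" by (cases k) auto
  with k run_prog_search_zero[OF assms(1,2)] show ?thesis by simp
qed

section \<open>Primitive recursive terms over a binary function\<close>

text \<open>Variables are de Bruijn indices into the argument list. In \<open>Rec m b s\<close>, the step \<open>s\<close> sees
  the previous value as \<open>Var 0\<close> and the counter as \<open>Var 1\<close>; \<open>Ora a b\<close> applies the binary
  function (the oracle-computable \<open>p\<close> of the main theorem).\<close>

datatype prexp = Var nat | Num nat | Succ prexp | Rec prexp prexp prexp | Ora prexp prexp

fun compile :: "nat \<Rightarrow> nat \<Rightarrow> prexp \<Rightarrow> nat" where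
  "compile P n (Var i) = prog_proj i"
| "compile P n (Num c) = prog_const c"
| "compile P n (Succ e) = prog_comp prog_succ [compile P n e]"
| "compile P n (Rec m b s) =
     prog_comp (prog_prec (compile P n b) (compile P (n + 2) s)) (compile P n m # map prog_proj [0..<n])"
| "compile P n (Ora a b) = prog_comp P [compile P n a, compile P n b]"

fun peval :: "(nat \<Rightarrow> nat \<Rightarrow> nat) \<Rightarrow> nat list \<Rightarrow> prexp \<Rightarrow> nat" where
  "peval \<phi> xs (Var i) = (if i < length xs then xs ! i else 0)"
| "peval \<phi> xs (Num c) = c"
| "peval \<phi> xs (Succ e) = Suc (peval \<phi> xs e)"
| "peval \<phi> xs (Rec m b s) = natrec (peval \<phi> xs b) (\<lambda>j r. peval \<phi> (r # j # xs) s) (peval \<phi> xs m)"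
| "peval \<phi> xs (Ora a b) = \<phi> (peval \<phi> xs a) (peval \<phi> xs b)"

fun scoped :: "nat \<Rightarrow> prexp \<Rightarrow> bool" where
  "scoped n (Var i) = (i < n)"
| "scoped n (Num c) = True"
| "scoped n (Succ e) = scoped n e"
| "scoped n (Rec m b s) = (scoped n m \<and> scoped n b \<and> scoped (n+2) s)"
| "scoped n (Ora a b) = (scoped n a \<and> scoped n b)"

lemma map_nth_upt: "length xs = n \<Longrightarrow> map (\<lambda>i. xs ! i) [0..<n] = xs"
  using map_nth[of xs] by simp

lemma computes_compile:
  assumes P: "\<And>a b. conv A P [a, b] (\<phi> a b)"
  shows "scoped n e \<Longrightarrow> computes A (compile P n e) n (\<lambda>xs. peval \<phi> xs e)"
proof (induction e arbitrary: n)
  case (Var i)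
  then show ?case using computes_prog_proj[of i n A] by (auto intro: computes_cong)
next
  case (Num c) then show ?case by (simp add: computes_prog_const)
next
  case (Succ e)
  have "computes A (prog_comp prog_succ [compile P n e]) n
          (\<lambda>xs. (\<lambda>ys. Suc (hd0 ys)) (map (\<lambda>G. G xs) [\<lambda>xs. peval \<phi> xs e]))"
    by (rule computes_prog_comp[OF computes_prog_succ]) (use Succ in auto)
  then show ?case by simp
next
  case (Rec m b s)
  have pr: "computes A (prog_prec (compile P n b) (compile P (n+2) s)) (Suc n)
     (\<lambda>xs. natrec ((\<lambda>xs. peval \<phi> xs b) (tl xs)) (\<lambda>j r. (\<lambda>xs. peval \<phi> xs s) (r # j # tl xs)) (hd xs))"
    by (rule computes_prog_prec) (use Rec in auto)
  have la: "list_all2 (\<lambda>g G. computes A g n G) (compile P n m # map prog_proj [0..<n])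
      ((\<lambda>xs. peval \<phi> xs m) # map (\<lambda>i xs. xs ! i) [0..<n])"
    using Rec by (auto simp: list_all2_map1 list_all2_map2 intro!: list_all2_all_nthI computes_prog_proj)
  have "computes A (compile P n (Rec m b s)) n
     (\<lambda>xs. (\<lambda>xs. natrec (peval \<phi> (tl xs) b) (\<lambda>j r. peval \<phi> (r # j # tl xs) s) (hd xs))
        (map (\<lambda>G. G xs) ((\<lambda>xs. peval \<phi> xs m) # map (\<lambda>i xs. xs ! i) [0..<n])))"
    unfolding compile.simps by (rule computes_prog_comp[OF pr la]) simp
  then show ?case
    by (rule computes_cong) (simp add: comp_def map_nth_upt)
next
  case (Ora a b)
  have P2: "computes A P 2 (\<lambda>ys. \<phi> (ys ! 0) (ys ! 1))"
    unfolding computes_def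
  proof (intro allI impI)
    fix ys :: "nat list" assume "length ys = 2"
    then obtain u v where "ys = [u, v]"
      by (metis (no_types) One_nat_def Suc_length_conv length_0_conv numeral_2_eq_2)
    then show "conv A P ys (\<phi> (ys ! 0) (ys ! 1))" using P by simp
  qed
  have "computes A (prog_comp P [compile P n a, compile P n b]) n
     (\<lambda>xs. (\<lambda>ys. \<phi> (ys ! 0) (ys ! 1)) (map (\<lambda>G. G xs) [\<lambda>xs. peval \<phi> xs a, \<lambda>xs. peval \<phi> xs b]))"
    by (rule computes_prog_comp[OF P2]) (use Ora in auto)
  then show ?case by simp
qed

fun shift :: "nat \<Rightarrow> prexp \<Rightarrow> prexp" where
  "shift c (Var i) = Var (if i < c then i else Suc i)"
| "shift c (Num n) = Num n"
| "shift c (Succ e) = Succ (shift c e)"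
| "shift c (Rec m b s) = Rec (shift c m) (shift c b) (shift (c+2) s)"
| "shift c (Ora a b) = Ora (shift c a) (shift c b)"

lemma peval_shift: "c \<le> length xs \<Longrightarrow> peval \<phi> (take c xs @ z # drop c xs) (shift c e) = peval \<phi> xs e"
proof (induction e arbitrary: c xs)
  case (Var i)
  then show ?case by (auto simp: nth_append min_def)
next
  case (Rec m b s)
  have "peval \<phi> (r # j # take c xs @ z # drop c xs) (shift (c+2) s) = peval \<phi> (r # j # xs) s" for r j
    using Rec.IH(3)[of "c+2" "r # j # xs"] Rec.prems by simp
  then show ?case using Rec by simp
qed auto

lemma peval_shift0 [simp]: "peval \<phi> (z # xs) (shift 0 e) = peval \<phi> xs e"
  using peval_shift[of 0 xs \<phi> z e] by simp

lemma scoped_shift_iff [simp]: "c \<le> n \<Longrightarrow> scoped (Suc n) (shift c e) = scoped n e"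
  by (induction e arbitrary: n c) auto

definition lift2 :: "prexp \<Rightarrow> prexp" where
  "lift2 e = shift 0 (shift 0 e)"
lemma peval_lift2 [simp]: "peval \<phi> (r # j # xs) (lift2 e) = peval \<phi> xs e"
  by (simp add: lift2_def)
lemma scoped_lift2 [simp]: "scoped (Suc (Suc n)) (lift2 e) = scoped n e"
  by (simp add: lift2_def)

definition EAdd :: "prexp \<Rightarrow> prexp \<Rightarrow> prexp" where
  "EAdd a b = Rec a b (Succ (Var 0))"
definition EPred :: "prexp \<Rightarrow> prexp" where
  "EPred a = Rec a (Num 0) (Var 1)"
definition EDiff :: "prexp \<Rightarrow> prexp \<Rightarrow> prexp" where
  "EDiff a b = Rec b a (EPred (Var 0))"
definition EIf :: "prexp \<Rightarrow> prexp \<Rightarrow> prexp \<Rightarrow> prexp" where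
  "EIf c a b = Rec c b (lift2 a)"
definition ENot :: "prexp \<Rightarrow> prexp" where
  "ENot a = EIf a (Num 0) (Num 1)"
definition EAnd :: "prexp \<Rightarrow> prexp \<Rightarrow> prexp" where
  "EAnd a b = EIf a (EIf b (Num 1) (Num 0)) (Num 0)"
definition EOr :: "prexp \<Rightarrow> prexp \<Rightarrow> prexp" where
  "EOr a b = EIf a (Num 1) (EIf b (Num 1) (Num 0))"
definition EEq :: "prexp \<Rightarrow> prexp \<Rightarrow> prexp" where
  "EEq a b = ENot (EAdd (EDiff a b) (EDiff b a))"
definition ELe :: "prexp \<Rightarrow> prexp \<Rightarrow> prexp" where
  "ELe a b = ENot (EDiff a b)"
definition ETri :: "prexp \<Rightarrow> prexp" where
  "ETri a = Rec a (Num 0) (EAdd (Var 0) (Succ (Var 1)))"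
definition EPair :: "prexp \<Rightarrow> prexp \<Rightarrow> prexp" where
  "EPair a b = EAdd (ETri (EAdd a b)) a"
definition ETriRoot :: "prexp \<Rightarrow> prexp" where
  "ETriRoot x = Rec x (Num 0) (EIf (ELe (ETri (Succ (Var 0))) (Succ (Var 1))) (Succ (Var 0)) (Var 0))"
definition EFst :: "prexp \<Rightarrow> prexp" where
  "EFst x = EDiff x (ETri (ETriRoot x))"
definition ESnd :: "prexp \<Rightarrow> prexp" where
  "ESnd x = EDiff (ETriRoot x) (EFst x)"
definition EBex :: "prexp \<Rightarrow> prexp \<Rightarrow> prexp" where
  "EBex m body = Rec m (Num 0) (EOr (Var 0) (shift 0 body))"
definition EBall :: "prexp \<Rightarrow> prexp \<Rightarrow> prexp" where
  "EBall m body = ENot (EBex m (ENot body))"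

lemma if_1_0_eq_0_iff [simp]:
  "(if P then 1 else (0::nat)) \<noteq> 0 \<longleftrightarrow> P"
  "(if P then 1 else (0::nat)) = 0 \<longleftrightarrow> \<not> P"
  by simp_all

lemma peval_EAdd [simp]: "peval \<phi> xs (EAdd a b) = peval \<phi> xs a + peval \<phi> xs b"
proof -
  have "natrec (peval \<phi> xs b) (\<lambda>j r. peval \<phi> (r # j # xs) (Succ (Var 0))) n = n + peval \<phi> xs b" for n
    by (induction n) auto
  then show ?thesis by (simp add: EAdd_def)
qed
lemma peval_EPred [simp]: "peval \<phi> xs (EPred a) = peval \<phi> xs a - 1"
proof -
  have "natrec 0 (\<lambda>j r. peval \<phi> (r # j # xs) (Var 1)) n = n - 1" for n
    by (induction n) auto
  then show ?thesis by (simp add: EPred_def)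
qed
lemma peval_EDiff [simp]: "peval \<phi> xs (EDiff a b) = peval \<phi> xs a - peval \<phi> xs b"
proof -
  have "natrec (peval \<phi> xs a) (\<lambda>j r. peval \<phi> (r # j # xs) (EPred (Var 0))) n = peval \<phi> xs a - n" for n
    by (induction n) auto
  then show ?thesis by (simp add: EDiff_def)
qed
lemma peval_EIf [simp]: "peval \<phi> xs (EIf c a b) = (if peval \<phi> xs c = 0 then peval \<phi> xs b else peval \<phi> xs a)"
proof -
  have "natrec (peval \<phi> xs b) (\<lambda>j r. peval \<phi> (r # j # xs) (lift2 a)) n =
        (if n = 0 then peval \<phi> xs b else peval \<phi> xs a)" for n
    by (cases n) auto
  then show ?thesis by (simp add: EIf_def)
qed
lemma peval_ENot [simp]: "peval \<phi> xs (ENot a) = (if peval \<phi> xs a = 0 then 1 else 0)"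
  by (simp add: ENot_def)
lemma peval_EAnd [simp]: "peval \<phi> xs (EAnd a b) = (if peval \<phi> xs a \<noteq> 0 \<and> peval \<phi> xs b \<noteq> 0 then 1 else 0)"
  by (simp add: EAnd_def)
lemma peval_EOr [simp]: "peval \<phi> xs (EOr a b) = (if peval \<phi> xs a \<noteq> 0 \<or> peval \<phi> xs b \<noteq> 0 then 1 else 0)"
  by (simp add: EOr_def)
lemma peval_EEq [simp]: "peval \<phi> xs (EEq a b) = (if peval \<phi> xs a = peval \<phi> xs b then 1 else 0)"
  by (simp add: EEq_def)
lemma peval_ELe [simp]: "peval \<phi> xs (ELe a b) = (if peval \<phi> xs a \<le> peval \<phi> xs b then 1 else 0)"
  by (simp add: ELe_def)
lemma peval_ETri [simp]: "peval \<phi> xs (ETri a) = triangle (peval \<phi> xs a)"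
proof -
  have "natrec 0 (\<lambda>j r. peval \<phi> (r # j # xs) (EAdd (Var 0) (Succ (Var 1)))) n = triangle n" for n
    by (induction n) auto
  then show ?thesis by (simp add: ETri_def)
qed
lemma peval_EPair [simp]: "peval \<phi> xs (EPair a b) = prod_encode (peval \<phi> xs a, peval \<phi> xs b)"
  by (simp add: EPair_def prod_encode_def)

fun tri_root :: "nat \<Rightarrow> nat" where
  "tri_root 0 = 0"
| "tri_root (Suc n) = (if triangle (Suc (tri_root n)) \<le> Suc n then Suc (tri_root n) else tri_root n)"

lemma tri_root_bounds: "triangle (tri_root n) \<le> n \<and> n < triangle (Suc (tri_root n))"
  by (induction n) auto

lemma prod_decode_tri_root:
  "prod_decode n = (n - triangle (tri_root n), tri_root n - (n - triangle (tri_root n)))"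
proof -
  let ?d = "tri_root n" and ?a = "n - triangle (tri_root n)"
  have n: "n = triangle ?d + ?a" and a: "?a \<le> ?d" using tri_root_bounds[of n] by auto
  have "prod_decode n = prod_decode_aux ?d ?a" using n prod_decode_triangle_add by metis
  also have "\<dots> = (?a, ?d - ?a)" using a by (simp add: prod_decode_aux.simps)
  finally show ?thesis .
qed

lemma peval_ETriRoot [simp]: "peval \<phi> xs (ETriRoot x) = tri_root (peval \<phi> xs x)"
proof -
  have "natrec 0 (\<lambda>j r. peval \<phi> (r # j # xs)
          (EIf (ELe (ETri (Succ (Var 0))) (Succ (Var 1))) (Succ (Var 0)) (Var 0))) n = tri_root n" for n
    by (induction n) (simp_all del: triangle_Suc)
  then show ?thesis by (simp add: ETriRoot_def del: triangle_Suc)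
qed
lemma peval_EFst [simp]: "peval \<phi> xs (EFst x) = fst (prod_decode (peval \<phi> xs x))"
  by (simp add: EFst_def prod_decode_tri_root del: triangle_Suc)
lemma peval_ESnd [simp]: "peval \<phi> xs (ESnd x) = snd (prod_decode (peval \<phi> xs x))"
  by (simp add: ESnd_def prod_decode_tri_root del: triangle_Suc)

lemma peval_EBex [simp]:
  "peval \<phi> xs (EBex m body) = (if \<exists>l<peval \<phi> xs m. peval \<phi> (l # xs) body \<noteq> 0 then 1 else 0)"
proof -
  have "natrec 0 (\<lambda>j r. peval \<phi> (r # j # xs) (EOr (Var 0) (shift 0 body))) n =
        (if \<exists>l<n. peval \<phi> (l # xs) body \<noteq> 0 then 1 else 0)" for n
    by (induction n) (auto simp: less_Suc_eq)
  then show ?thesis by (simp only: EBex_def peval.simps(4) peval.simps(2))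
qed
lemma peval_EBall [simp]:
  "peval \<phi> xs (EBall m body) = (if \<forall>l<peval \<phi> xs m. peval \<phi> (l # xs) body \<noteq> 0 then 1 else 0)"
  by (auto simp add: EBall_def)

lemma scoped_derived [simp]:
  "scoped n (EAdd a b) = (scoped n a \<and> scoped n b)"
  "scoped n (EPred a) = scoped n a"
  "scoped n (EDiff a b) = (scoped n a \<and> scoped n b)"
  "scoped n (EIf c a b) = (scoped n c \<and> scoped n a \<and> scoped n b)"
  "scoped n (ENot a) = scoped n a"
  "scoped n (EAnd a b) = (scoped n a \<and> scoped n b)"
  "scoped n (EOr a b) = (scoped n a \<and> scoped n b)"
  "scoped n (EEq a b) = (scoped n a \<and> scoped n b)"
  "scoped n (ELe a b) = (scoped n a \<and> scoped n b)"
  "scoped n (ETri a) = scoped n a"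
  "scoped n (EPair a b) = (scoped n a \<and> scoped n b)"
  "scoped n (ETriRoot a) = scoped n a"
  "scoped n (EFst a) = scoped n a"
  "scoped n (ESnd a) = scoped n a"
  "scoped n (EBex m body) = (scoped n m \<and> scoped (Suc n) body)"
  "scoped n (EBall m body) = (scoped n m \<and> scoped (Suc n) body)"
  by (auto simp: EAdd_def EPred_def EDiff_def EIf_def ENot_def EAnd_def EOr_def EEq_def ELe_def ETri_def
     EPair_def ETriRoot_def EFst_def ESnd_def EBex_def EBall_def)

section \<open>Certificates of halting computations\<close>

definition code_hd :: "nat \<Rightarrow> nat" where "code_hd x = pfst (x - 1)"
definition code_tl :: "nat \<Rightarrow> nat" where "code_tl x = psnd (x - 1)"
definition code_drop :: "nat \<Rightarrow> nat \<Rightarrow> nat" where "code_drop i x = (code_tl ^^ i) x"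
definition code_nth :: "nat \<Rightarrow> nat \<Rightarrow> nat" where "code_nth x i = code_hd (code_drop i x)"

lemma prod_decode_0: "prod_decode 0 = (0, 0)"
  by (simp add: prod_decode_def prod_decode_aux.simps)

lemma code_hd_cons [simp]: "code_hd (Suc (pair a l)) = a"
  by (simp add: code_hd_def)

lemma code_tl_cons [simp]: "code_tl (Suc (pair a l)) = l"
  by (simp add: code_tl_def)

lemma code_hd_list_encode: "code_hd (list_encode L) = hd0 L"
  by (cases L) (auto simp: code_hd_def prod_decode_0)

lemma code_tl_list_encode: "code_tl (list_encode L) = list_encode (tl L)"
  by (cases L) (auto simp: code_tl_def prod_decode_0)

lemma list_encode_eq_0_iff [simp]: "list_encode L = 0 \<longleftrightarrow> L = []"
  by (cases L) auto

lemma code_drop_list_encode: "code_drop i (list_encode L) = list_encode (drop i L)"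
  by (induction i) (simp_all add: code_drop_def code_tl_list_encode drop_Suc tl_drop)

lemma code_drop_list_encode_eq_0_iff [simp]: "code_drop i (list_encode L) = 0 \<longleftrightarrow> length L \<le> i"
  by (simp add: code_drop_list_encode)

lemma code_drop_list_encode_gt_0_iff [simp]: "0 < code_drop i (list_encode L) \<longleftrightarrow> i < length L"
  using code_drop_list_encode_eq_0_iff[of i L] by linarith

lemma hd0_drop: "hd0 (drop i L) = (if i < length L then L ! i else 0)"
  by (induction L arbitrary: i) (auto simp: drop_Cons split: nat.splits)

lemma code_nth_list_encode [simp]: "code_nth (list_encode L) i = (if i < length L then L ! i else 0)"
  by (simp add: code_nth_def code_drop_list_encode code_hd_list_encode hd0_drop)

lemma length_le_list_encode: "length L \<le> list_encode L"
proof (induction L)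
  case (Cons a L)
  have "list_encode L \<le> pair a (list_encode L)" by (rule le_prod_encode_2)
  with Cons show ?case by simp
qed simp

definition cfact :: "nat \<Rightarrow> nat \<Rightarrow> nat \<Rightarrow> nat" where "cfact e xs y = pair e (pair xs y)"

definition cfact_true :: "nat \<Rightarrow> bool" where
  "cfact_true k \<longleftrightarrow> conv noOracle (pfst k) (list_decode (pfst (psnd k))) (psnd (psnd k))"

lemma cfact_decode [simp]:
  "pfst (cfact e xs y) = e" "pfst (psnd (cfact e xs y)) = xs" "psnd (psnd (cfact e xs y)) = y"
  by (simp_all add: cfact_def)

lemma cfact_true_cfact [simp]: "cfact_true (cfact e xs y) \<longleftrightarrow> conv noOracle e (list_decode xs) y"
  by (simp add: cfact_true_def)

text \<open>\<open>step_derives P e xs y aux\<close> says that one unfolding of \<^const>\<open>run\<close> derives that program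
  \<open>e\<close> maps the list coded by \<open>xs\<close> to \<open>y\<close> from claims \<open>cfact e' xs' y'\<close> satisfying \<open>P\<close>.
  The witness \<open>aux\<close> is the intermediate value of the step: the coded list of arguments of a
  composition, the previous value of a primitive recursion, or the value tested by a search.\<close>

definition step_derives :: "(nat \<Rightarrow> bool) \<Rightarrow> nat \<Rightarrow> nat \<Rightarrow> nat \<Rightarrow> nat \<Rightarrow> bool" where
  "step_derives P e xs y aux \<longleftrightarrow>
    (let t = pfst e; c = psnd e in
       (t = 0 \<and> y = 0) \<or>
       (t = 1 \<and> y = Suc (code_hd xs)) \<or>
       (t = 2 \<and> code_drop c xs \<noteq> 0 \<and> y = code_nth xs c) \<or>
       (t = 3 \<and> (\<forall>l<psnd c. code_drop l (psnd c) \<noteq> 0 \<longrightarrow>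
                    code_drop l aux \<noteq> 0 \<and> P (cfact (code_nth (psnd c) l) xs (code_nth aux l)))
              \<and> (\<forall>l<aux. code_drop l aux \<noteq> 0 \<longrightarrow> code_drop l (psnd c) \<noteq> 0)
              \<and> P (cfact (pfst c) aux y)) \<or>
       (t = 4 \<and> xs \<noteq> 0 \<and> code_hd xs = 0 \<and> P (cfact (pfst c) (code_tl xs) y)) \<or>
       (t = 4 \<and> xs \<noteq> 0 \<and> code_hd xs \<noteq> 0
              \<and> P (cfact e (Suc (pair (code_hd xs - 1) (code_tl xs))) aux)
              \<and> P (cfact (psnd c) (Suc (pair aux (Suc (pair (code_hd xs - 1) (code_tl xs))))) y)) \<or>
       (t = 5 \<and> P (cfact (pair 6 (pair c 0)) xs y)) \<or>
       (t = 6 \<and> P (cfact (pfst c) (Suc (pair (psnd c) xs)) aux) \<and> aux = 0 \<and> y = psnd c) \<or>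
       (t = 6 \<and> P (cfact (pfst c) (Suc (pair (psnd c) xs)) aux) \<and> aux \<noteq> 0
              \<and> P (cfact (pair 6 (pair (pfst c) (Suc (psnd c)))) xs y)) \<or>
       (t = 7 \<and> y = 0))"

lemma step_derives_mono: "step_derives P e xs y aux \<Longrightarrow> (\<And>k. P k \<Longrightarrow> Q k) \<Longrightarrow> step_derives Q e xs y aux"
  unfolding step_derives_def Let_def by (elim disj_forward) blast+

lemma list_all2_code_lists:
  assumes "\<forall>l<gs. code_drop l gs \<noteq> 0 \<longrightarrow> code_drop l ys \<noteq> 0 \<and> R (code_nth gs l) (code_nth ys l)"
    and "\<forall>l<ys. code_drop l ys \<noteq> 0 \<longrightarrow> code_drop l gs \<noteq> 0"
  shows "list_all2 R (list_decode gs) (list_decode ys)"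
proof -
  define G Y where "G = list_decode gs" and "Y = list_decode ys"
  then have gs: "gs = list_encode G" and ys: "ys = list_encode Y" by simp_all
  have below_code: "l < length Z \<Longrightarrow> l < list_encode Z" for l Z
    using length_le_list_encode[of Z] by linarith
  have "\<not> length Y < length G" and "\<not> length G < length Y"
    using assms below_code[of "length Y" G] below_code[of "length G" Y] by (auto simp: gs ys)
  then have "length G = length Y" by simp
  with assms below_code show ?thesis
    by (auto simp: gs ys list_all2_conv_all_nth)
qed

lemma step_derives_sound:
  assumes "step_derives P e xs y aux" and P_true: "\<And>k. P k \<Longrightarrow> cfact_true k"
  shows "conv noOracle e (list_decode xs) y"
proof -
  obtain t c where tc: "prod_decode e = (t, c)" by fastforce
  then have e: "e = pair t c" by (metis prod_decode_inverse)
  obtain L where xs: "xs = list_encode L" by (metis list_decode_inverse)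
  have conv_P: "conv noOracle e' (list_decode xs') y'" if "P (cfact e' xs' y')" for e' xs' y'
    using P_true[OF that] by simp
  show ?thesis
    using assms(1) unfolding step_derives_def Let_def tc fst_conv snd_conv
  proof (elim disjE conjE)
    assume "t = 0" "y = 0"
    then show ?thesis by (intro convI[of _ 1]) (simp add: e run_Suc_pair)
  next
    assume "t = 1" "y = Suc (code_hd xs)"
    then show ?thesis by (intro convI[of _ 1]) (simp add: e xs run_Suc_pair code_hd_list_encode)
  next
    assume "t = 2" "code_drop c xs \<noteq> 0" "y = code_nth xs c"
    then show ?thesis by (intro convI[of _ 1]) (simp add: e xs run_Suc_pair)
  next
    assume "t = 3"
      and "\<forall>l<psnd c. code_drop l (psnd c) \<noteq> 0 \<longrightarrow>
             code_drop l aux \<noteq> 0 \<and> P (cfact (code_nth (psnd c) l) xs (code_nth aux l))"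
      and "\<forall>l<aux. code_drop l aux \<noteq> 0 \<longrightarrow> code_drop l (psnd c) \<noteq> 0"
      and "P (cfact (pfst c) aux y)"
    then have "list_all2 (\<lambda>g v. conv noOracle g (list_decode xs) v) (list_decode (psnd c)) (list_decode aux)"
      by (intro list_all2_code_lists) (auto dest: conv_P)
    moreover have "e = prog_comp (pfst c) (list_decode (psnd c))"
      by (simp add: e \<open>t = 3\<close> prog_comp_def)
    ultimately show ?thesis
      using conv_P[OF \<open>P (cfact (pfst c) aux y)\<close>] by (simp add: conv_prog_comp_intro)
  next
    assume "t = 4" "xs \<noteq> 0" "code_hd xs = 0" "P (cfact (pfst c) (code_tl xs) y)"
    moreover obtain ys where "L = 0 # ys"
      using calculation(2,3) unfolding xs by (cases L) (auto simp: code_hd_list_encode)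
    ultimately show ?thesis
      by (elim conv_by_step[OF conv_P])
        (simp add: e xs run_Suc_pair code_tl_list_encode)
  next
    assume "t = 4" "xs \<noteq> 0" "code_hd xs \<noteq> 0"
      and "P (cfact e (Suc (pair (code_hd xs - 1) (code_tl xs))) aux)"
      and "P (cfact (psnd c) (Suc (pair aux (Suc (pair (code_hd xs - 1) (code_tl xs))))) y)"
    moreover obtain n ys where L: "L = n # ys" "n \<noteq> 0"
      using calculation(2,3) unfolding xs by (cases L) (auto simp: code_hd_list_encode)
    ultimately have "conv noOracle e ((n - 1) # ys) aux" "conv noOracle (psnd c) (aux # (n - 1) # ys) y"
      by (auto dest!: conv_P simp: xs code_hd_list_encode code_tl_list_encode)
    then show ?thesis
      by (rule conv_by_step2) (simp add: e xs L \<open>t = 4\<close> run_Suc_pair)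
  next
    assume "t = 5" "P (cfact (pair 6 (pair c 0)) xs y)"
    then show ?thesis by (elim conv_by_step[OF conv_P]) (simp add: e run_Suc_pair)
  next
    assume "t = 6" "P (cfact (pfst c) (Suc (pair (psnd c) xs)) aux)" "aux = 0" "y = psnd c"
    then have "conv noOracle (pfst c) (psnd c # L) 0" by (auto dest!: conv_P simp: xs)
    then show ?thesis by (rule conv_by_step) (simp add: e xs \<open>t = 6\<close> \<open>y = psnd c\<close> run_Suc_pair)
  next
    assume "t = 6" "P (cfact (pfst c) (Suc (pair (psnd c) xs)) aux)" "aux \<noteq> 0"
      and "P (cfact (pair 6 (pair (pfst c) (Suc (psnd c)))) xs y)"
    then have "conv noOracle (pfst c) (psnd c # L) aux"
      and "conv noOracle (pair 6 (pair (pfst c) (Suc (psnd c)))) L y"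
      by (auto dest!: conv_P simp: xs)
    then show ?thesis by (rule conv_by_step2) (simp add: e xs \<open>t = 6\<close> \<open>aux \<noteq> 0\<close> run_Suc_pair)
  next
    assume "t = 7" "y = 0"
    then show ?thesis by (intro convI[of _ 1]) (simp add: e run_Suc_pair noOracle_def)
  qed
qed

definition justified :: "nat \<Rightarrow> (nat \<Rightarrow> bool) \<Rightarrow> bool" where
  "justified E P \<longleftrightarrow> step_derives P (pfst (pfst E)) (pfst (psnd (pfst E))) (psnd (psnd (pfst E))) (psnd E)"

lemma justified_entry [simp]: "justified (pair (cfact e xs y) aux) P \<longleftrightarrow> step_derives P e xs y aux"
  by (simp add: justified_def)

lemma justified_0: "justified 0 P"
  by (simp add: justified_def step_derives_def prod_decode_0)

lemma justified_mono: "justified E P \<Longrightarrow> (\<And>k. P k \<Longrightarrow> Q k) \<Longrightarrow> justified E Q"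
  unfolding justified_def by (rule step_derives_mono)

lemma justified_sound: "justified E P \<Longrightarrow> (\<And>k. P k \<Longrightarrow> cfact_true k) \<Longrightarrow> cfact_true (pfst E)"
  unfolding justified_def by (simp add: cfact_true_def step_derives_sound)

definition chain_facts :: "nat list \<Rightarrow> nat set" where
  "chain_facts Es = pfst ` set Es"

definition valid_chain :: "nat list \<Rightarrow> bool" where
  "valid_chain Es \<longleftrightarrow> (\<forall>m<length Es. justified (Es ! m) (\<lambda>k. k \<in> chain_facts (take m Es)))"

lemma chain_facts_append [simp]: "chain_facts (A @ B) = chain_facts A \<union> chain_facts B"
  by (simp add: chain_facts_def image_Un)

lemma valid_chain_append:
  assumes "valid_chain A"
    and "\<forall>m<length B. justified (B ! m) (\<lambda>k. k \<in> chain_facts (A @ take m B))"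
  shows "valid_chain (A @ B)"
  unfolding valid_chain_def
proof (intro allI impI)
  fix m
  assume "m < length (A @ B)"
  then consider "m < length A" | j where "m = length A + j" "j < length B"
    by (metis add_diff_inverse_nat length_append nat_add_left_cancel_less)
  then show "justified ((A @ B) ! m) (\<lambda>k. k \<in> chain_facts (take m (A @ B)))"
    by cases (use assms in \<open>auto simp: valid_chain_def nth_append\<close>)
qed

definition certifiable :: "nat set \<Rightarrow> bool" where
  "certifiable S \<longleftrightarrow> (\<exists>Es. valid_chain Es \<and> S \<subseteq> chain_facts Es)"

lemma certifiable_empty: "certifiable {}"
  unfolding certifiable_def valid_chain_def by (intro exI[of _ "[]"]) simp

lemma certifiable_Un: "certifiable S \<Longrightarrow> certifiable T \<Longrightarrow> certifiable (S \<union> T)"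
  unfolding certifiable_def
proof (elim exE conjE)
  fix A B
  assume "valid_chain A" "S \<subseteq> chain_facts A" "valid_chain B" "T \<subseteq> chain_facts B"
  moreover have "valid_chain (A @ B)"
    using \<open>valid_chain A\<close> \<open>valid_chain B\<close>
    by (intro valid_chain_append) (auto simp: valid_chain_def elim: justified_mono)
  ultimately show "\<exists>Es. valid_chain Es \<and> S \<union> T \<subseteq> chain_facts Es"
    by (intro exI[of _ "A @ B"]) auto
qed

lemma certifiable_UN: "(\<And>l. l < (n::nat) \<Longrightarrow> certifiable (S l)) \<Longrightarrow> certifiable (\<Union>l<n. S l)"
  by (induction n) (simp_all add: certifiable_empty lessThan_Suc certifiable_Un)

lemma certifiable_by_step:
  assumes "certifiable S" and "step_derives (\<lambda>k. k \<in> S) e xs y aux"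
  shows "certifiable {cfact e xs y}"
proof -
  obtain A where A: "valid_chain A" "S \<subseteq> chain_facts A"
    using assms(1) unfolding certifiable_def by blast
  have "valid_chain (A @ [pair (cfact e xs y) aux])"
    using A assms(2) by (intro valid_chain_append) (auto elim: step_derives_mono)
  then show ?thesis
    unfolding certifiable_def by (intro exI[of _ "A @ [pair (cfact e xs y) aux]"]) (simp add: chain_facts_def)
qed

lemma certifiable_insert: "certifiable {a} \<Longrightarrow> certifiable S \<Longrightarrow> certifiable (insert a S)"
  using certifiable_Un[of "{a}" S] by simp

lemma those_Some_nth:
  "those (map f gs) = Some ys \<Longrightarrow> length ys = length gs \<and> (\<forall>l<length gs. f (gs ! l) = Some (ys ! l))"
  by (induction gs arbitrary: ys) (auto split: option.splits simp: nth_Cons split: nat.splits)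

lemma certifiable_run_prog_comp:
  assumes IH: "\<And>e L y. run noOracle k e L = Some y \<Longrightarrow> certifiable {cfact e (list_encode L) y}"
    and run: "run noOracle (Suc k) (prog_comp f gs) L = Some y"
  shows "certifiable {cfact (prog_comp f gs) (list_encode L) y}"
proof -
  obtain Y where Y: "those (map (\<lambda>g. run noOracle k g L) gs) = Some Y"
    and f: "run noOracle k f Y = Some y"
    using run by (auto split: option.splits)
  let ?S = "(\<Union>l<length gs. {cfact (gs ! l) (list_encode L) (Y ! l)}) \<union> {cfact f (list_encode Y) y}"
  have "certifiable ?S"
    using those_Some_nth[OF Y] IH f by (intro certifiable_Un certifiable_UN) auto
  moreover have "step_derives (\<lambda>k. k \<in> ?S) (prog_comp f gs) (list_encode L) y (list_encode Y)"
    using those_Some_nth[OF Y] length_le_list_encode[of gs]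
    by (auto simp: prog_comp_def step_derives_def intro: order.strict_trans2)
  ultimately show ?thesis by (rule certifiable_by_step)
qed

lemma certifiable_run_prog_prec:
  assumes IH: "\<And>e L y. run noOracle k e L = Some y \<Longrightarrow> certifiable {cfact e (list_encode L) y}"
    and run: "run noOracle (Suc k) (prog_prec f g) L = Some y"
  shows "certifiable {cfact (prog_prec f g) (list_encode L) y}"
proof -
  obtain n ys where L: "L = n # ys" using run by (cases L) auto
  show ?thesis
  proof (cases "n = 0")
    case True
    with run L have "certifiable {cfact f (list_encode ys) y}" by (simp add: IH)
    moreover have "step_derives (\<lambda>k. k \<in> {cfact f (list_encode ys) y}) (prog_prec f g) (list_encode L) y 0"
      by (simp add: prog_prec_def L True step_derives_def)
    ultimately show ?thesis by (rule certifiable_by_step)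
  next
    case False
    with run L obtain z where r1: "run noOracle k (prog_prec f g) ((n - 1) # ys) = Some z"
      and r2: "run noOracle k g (z # (n - 1) # ys) = Some y"
      by (auto split: option.splits)
    let ?S = "{cfact (prog_prec f g) (list_encode ((n - 1) # ys)) z,
               cfact g (list_encode (z # (n - 1) # ys)) y}"
    have "certifiable ?S" using IH[OF r1] IH[OF r2] by (rule certifiable_insert)
    moreover have "step_derives (\<lambda>k. k \<in> ?S) (prog_prec f g) (list_encode L) y z"
      using False by (simp add: prog_prec_def L step_derives_def)
    ultimately show ?thesis by (rule certifiable_by_step)
  qed
qed

lemma certifiable_run_prog_min:
  assumes IH: "\<And>e L y. run noOracle k e L = Some y \<Longrightarrow> certifiable {cfact e (list_encode L) y}"
    and run: "run noOracle (Suc k) (prog_min c) L = Some y"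
  shows "certifiable {cfact (prog_min c) (list_encode L) y}"
proof -
  from run have "certifiable {cfact (prog_search c 0) (list_encode L) y}" by (simp add: IH)
  moreover have "step_derives (\<lambda>k. k \<in> {cfact (prog_search c 0) (list_encode L) y})
                   (prog_min c) (list_encode L) y 0"
    by (simp add: prog_min_def prog_search_def step_derives_def)
  ultimately show ?thesis by (rule certifiable_by_step)
qed

lemma certifiable_run_prog_search:
  assumes IH: "\<And>e L y. run noOracle k e L = Some y \<Longrightarrow> certifiable {cfact e (list_encode L) y}"
    and run: "run noOracle (Suc k) (prog_search f m) L = Some y"
  shows "certifiable {cfact (prog_search f m) (list_encode L) y}"
proof -
  from run obtain z where r1: "run noOracle k f (m # L) = Some z"
    by (auto split: option.splits)
  let ?f1 = "cfact f (list_encode (m # L)) z"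
  show ?thesis
  proof (cases "z = 0")
    case True
    with run r1 have "y = m" by simp
    with True have "step_derives (\<lambda>k. k \<in> {?f1}) (prog_search f m) (list_encode L) y z"
      by (simp add: prog_search_def step_derives_def)
    with IH[OF r1] show ?thesis by (rule certifiable_by_step)
  next
    case False
    with run r1 have r2: "run noOracle k (prog_search f (Suc m)) L = Some y" by simp
    let ?S = "{?f1, cfact (prog_search f (Suc m)) (list_encode L) y}"
    have "certifiable ?S" using IH[OF r1] IH[OF r2] by (rule certifiable_insert)
    moreover have "step_derives (\<lambda>k. k \<in> ?S) (prog_search f m) (list_encode L) y z"
      using False by (simp add: prog_search_def step_derives_def)
    ultimately show ?thesis by (rule certifiable_by_step)
  qed
qed

lemma run_certifiable: "run noOracle k e L = Some y \<Longrightarrow> certifiable {cfact e (list_encode L) y}"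
proof (induction k arbitrary: e L y)
  case (Suc k)
  obtain t c where "prod_decode e = (t, c)" by fastforce
  then have e: "e = pair t c" by (metis prod_decode_inverse)
  consider "t = 0 \<or> t = 1 \<or> t = 2 \<or> t = 7" | "t = 3" | "t = 4" | "t = 5" | "t = 6" | "t > 7"
    by linarith
  then show ?case
  proof cases
    case 1
    with Suc.prems have "step_derives (\<lambda>k. k \<in> {}) e (list_encode L) y 0"
      by (auto simp: e run_Suc_pair step_derives_def code_hd_list_encode noOracle_def split: if_splits)
    then show ?thesis by (rule certifiable_by_step[OF certifiable_empty])
  next
    case 2
    then have "e = prog_comp (pfst c) (list_decode (psnd c))" by (simp add: e prog_comp_def)
    with certifiable_run_prog_comp[OF Suc.IH] Suc.prems show ?thesis by simp
  next
    case 3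
    then have "e = prog_prec (pfst c) (psnd c)" by (simp add: e prog_prec_def)
    with certifiable_run_prog_prec[OF Suc.IH] Suc.prems show ?thesis by simp
  next
    case 4
    then have "e = prog_min c" by (simp add: e prog_min_def)
    with certifiable_run_prog_min[OF Suc.IH] Suc.prems show ?thesis by simp
  next
    case 5
    then have "e = prog_search (pfst c) (psnd c)" by (simp add: e prog_search_def)
    with certifiable_run_prog_search[OF Suc.IH] Suc.prems show ?thesis by simp
  next
    case 6
    with Suc.prems show ?thesis by (simp add: e run_Suc_pair)
  qed
qed simp

text \<open>The bound \<open>m < C\<close> ranges beyond the entries of the coded list; those positions read as
  entry 0, which is harmlessly justified: it claims that program 0 maps the empty list to 0.\<close>

definition valid_cert :: "nat \<Rightarrow> bool" where
  "valid_cert C \<longleftrightarrow> (\<forall>m<C. justified (code_nth C m) (\<lambda>k. \<exists>l<m. pfst (code_nth C l) = k))"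

definition certifies :: "nat \<Rightarrow> nat \<Rightarrow> nat \<Rightarrow> nat \<Rightarrow> bool" where
  "certifies C e xs y \<longleftrightarrow> valid_cert C \<and> (\<exists>m<C. pfst (code_nth C m) = cfact e xs y)"

lemma valid_cert_sound:
  assumes "valid_cert C" and "m < C"
  shows "cfact_true (pfst (code_nth C m))"
  using assms(2)
proof (induction m rule: less_induct)
  case (less m)
  with assms(1) have "justified (code_nth C m) (\<lambda>k. \<exists>l<m. pfst (code_nth C l) = k)"
    by (simp add: valid_cert_def)
  then show ?case by (rule justified_sound) (use less in auto)
qed

lemma certifies_sound: "certifies C e xs y \<Longrightarrow> conv noOracle e (list_decode xs) y"
  unfolding certifies_def using valid_cert_sound by (metis cfact_true_cfact)

lemma index_below_list_encode: "m < length Es \<Longrightarrow> m < list_encode Es"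
  using length_le_list_encode[of Es] by linarith

lemma valid_chain_certifies:
  assumes "valid_chain Es" and "cfact e xs y \<in> chain_facts Es"
  shows "certifies (list_encode Es) e xs y"
proof -
  let ?C = "list_encode Es"
  have "justified (code_nth ?C m) (\<lambda>k. \<exists>l<m. pfst (code_nth ?C l) = k)" for m
  proof (cases "m < length Es")
    case True
    with assms(1) have "justified (Es ! m) (\<lambda>k. k \<in> chain_facts (take m Es))"
      by (simp add: valid_chain_def)
    then have "justified (Es ! m) (\<lambda>k. \<exists>l<m. pfst (code_nth ?C l) = k)"
    proof (rule justified_mono)
      fix k
      assume "k \<in> chain_facts (take m Es)"
      then obtain l where "l < m" "pfst (Es ! l) = k"
        by (auto simp: chain_facts_def in_set_conv_nth)
      with True show "\<exists>l<m. pfst (code_nth ?C l) = k" by (intro exI[of _ l]) simp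
    qed
    with True show ?thesis by simp
  next
    case False
    then show ?thesis by (simp add: justified_0)
  qed
  moreover obtain m where "m < length Es" "pfst (Es ! m) = cfact e xs y"
    using assms(2) by (auto simp: chain_facts_def in_set_conv_nth)
  then have "m < ?C \<and> pfst (code_nth ?C m) = cfact e xs y"
    by (simp add: index_below_list_encode)
  ultimately show ?thesis
    unfolding certifies_def valid_cert_def by blast
qed

lemma conv_iff_certifies: "conv noOracle e L y \<longleftrightarrow> (\<exists>C. certifies C e (list_encode L) y)"
proof
  assume "conv noOracle e L y"
  then obtain k where "run noOracle k e L = Some y" unfolding conv_def by blast
  then obtain Es where "valid_chain Es" "cfact e (list_encode L) y \<in> chain_facts Es"
    using run_certifiable unfolding certifiable_def by blast
  then show "\<exists>C. certifies C e (list_encode L) y"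
    by (blast intro: valid_chain_certifies)
next
  assume "\<exists>C. certifies C e (list_encode L) y"
  then show "conv noOracle e L y"
    using certifies_sound by fastforce
qed

section \<open>Checking certificates by a primitive recursive term\<close>

definition ECodeHd :: "prexp \<Rightarrow> prexp" where "ECodeHd x = EFst (EPred x)"
definition ECodeTl :: "prexp \<Rightarrow> prexp" where "ECodeTl x = ESnd (EPred x)"
definition ECodeDrop :: "prexp \<Rightarrow> prexp \<Rightarrow> prexp" where "ECodeDrop i x = Rec i x (ECodeTl (Var 0))"
definition ECodeNth :: "prexp \<Rightarrow> prexp \<Rightarrow> prexp" where "ECodeNth x i = ECodeHd (ECodeDrop i x)"
definition ECFact :: "prexp \<Rightarrow> prexp \<Rightarrow> prexp \<Rightarrow> prexp" where "ECFact e xs y = EPair e (EPair xs y)"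
definition EEarlier :: "prexp \<Rightarrow> prexp \<Rightarrow> prexp \<Rightarrow> prexp" where
  "EEarlier C m k = EBex m (EEq (EFst (ECodeNth (shift 0 C) (Var 0))) (shift 0 k))"

lemma peval_ECodeHd [simp]: "peval \<phi> xs (ECodeHd x) = code_hd (peval \<phi> xs x)"
  by (simp add: ECodeHd_def code_hd_def)

lemma peval_ECodeTl [simp]: "peval \<phi> xs (ECodeTl x) = code_tl (peval \<phi> xs x)"
  by (simp add: ECodeTl_def code_tl_def)

lemma peval_ECodeDrop [simp]: "peval \<phi> xs (ECodeDrop i x) = code_drop (peval \<phi> xs i) (peval \<phi> xs x)"
proof -
  have "natrec (peval \<phi> xs x) (\<lambda>j r. peval \<phi> (r # j # xs) (ECodeTl (Var 0))) n = code_drop n (peval \<phi> xs x)" for n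
    by (induction n) (simp_all add: code_drop_def)
  then show ?thesis by (simp add: ECodeDrop_def)
qed

lemma peval_ECodeNth [simp]: "peval \<phi> xs (ECodeNth x i) = code_nth (peval \<phi> xs x) (peval \<phi> xs i)"
  by (simp add: ECodeNth_def code_nth_def)

lemma peval_ECFact [simp]: "peval \<phi> xs (ECFact e ys y) = cfact (peval \<phi> xs e) (peval \<phi> xs ys) (peval \<phi> xs y)"
  by (simp add: ECFact_def cfact_def)

lemma peval_EEarlier [simp]:
  "peval \<phi> xs (EEarlier C m k) =
   (if \<exists>l<peval \<phi> xs m. pfst (code_nth (peval \<phi> xs C) l) = peval \<phi> xs k then 1 else 0)"
  by (simp add: EEarlier_def)

lemma scoped_code_ops [simp]:
  "scoped n (ECodeHd x) = scoped n x"
  "scoped n (ECodeTl x) = scoped n x"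
  "scoped n (ECodeDrop i x) = (scoped n i \<and> scoped n x)"
  "scoped n (ECodeNth x i) = (scoped n x \<and> scoped n i)"
  "scoped n (ECFact e ys y) = (scoped n e \<and> scoped n ys \<and> scoped n y)"
  "scoped n (EEarlier C m k) = (scoped n C \<and> scoped n m \<and> scoped n k)"
  by (auto simp: ECodeHd_def ECodeTl_def ECodeDrop_def ECodeNth_def ECFact_def EEarlier_def)

definition EJustified :: "prexp \<Rightarrow> prexp \<Rightarrow> prexp \<Rightarrow> prexp" where
  "EJustified E C m =
    (let k = EFst E; aux = ESnd E; e = EFst k; xs = EFst (ESnd k); y = ESnd (ESnd k);
         t = EFst e; c = ESnd e; earlier = EEarlier C m in
     EOr (EAnd (EEq t (Num 0)) (EEq y (Num 0)))
     (EOr (EAnd (EEq t (Num 1)) (EEq y (Succ (ECodeHd xs))))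
     (EOr (EAnd (EEq t (Num 2)) (EAnd (ENot (EEq (ECodeDrop c xs) (Num 0))) (EEq y (ECodeNth xs c))))
     (EOr (EAnd (EEq t (Num 3))
            (EAnd (EBall (ESnd c)
                    (EOr (EEq (ECodeDrop (Var 0) (ESnd (shift 0 c))) (Num 0))
                      (EAnd (ENot (EEq (ECodeDrop (Var 0) (shift 0 aux)) (Num 0)))
                        (EEarlier (shift 0 C) (shift 0 m)
                          (ECFact (ECodeNth (ESnd (shift 0 c)) (Var 0)) (shift 0 xs)
                            (ECodeNth (shift 0 aux) (Var 0)))))))
            (EAnd (EBall aux (EOr (EEq (ECodeDrop (Var 0) (shift 0 aux)) (Num 0))
                              (ENot (EEq (ECodeDrop (Var 0) (ESnd (shift 0 c))) (Num 0)))))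
                  (earlier (ECFact (EFst c) aux y)))))
     (EOr (EAnd (EEq t (Num 4)) (EAnd (ENot (EEq xs (Num 0)))
            (EAnd (EEq (ECodeHd xs) (Num 0)) (earlier (ECFact (EFst c) (ECodeTl xs) y)))))
     (EOr (EAnd (EEq t (Num 4)) (EAnd (ENot (EEq xs (Num 0))) (EAnd (ENot (EEq (ECodeHd xs) (Num 0)))
            (EAnd (earlier (ECFact e (Succ (EPair (EPred (ECodeHd xs)) (ECodeTl xs))) aux))
                  (earlier (ECFact (ESnd c)
                     (Succ (EPair aux (Succ (EPair (EPred (ECodeHd xs)) (ECodeTl xs))))) y))))))
     (EOr (EAnd (EEq t (Num 5)) (earlier (ECFact (EPair (Num 6) (EPair c (Num 0))) xs y)))
     (EOr (EAnd (EEq t (Num 6)) (EAnd (earlier (ECFact (EFst c) (Succ (EPair (ESnd c) xs)) aux))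
            (EAnd (EEq aux (Num 0)) (EEq y (ESnd c)))))
     (EOr (EAnd (EEq t (Num 6)) (EAnd (earlier (ECFact (EFst c) (Succ (EPair (ESnd c) xs)) aux))
            (EAnd (ENot (EEq aux (Num 0)))
                  (earlier (ECFact (EPair (Num 6) (EPair (EFst c) (Succ (ESnd c)))) xs y)))))
     (EAnd (EEq t (Num 7)) (EEq y (Num 0))))))))))))"

lemma peval_EJustified [simp]:
  "peval \<phi> env (EJustified E C m) =
   (if justified (peval \<phi> env E) (\<lambda>k. \<exists>l<peval \<phi> env m. pfst (code_nth (peval \<phi> env C) l) = k)
    then 1 else 0)"
  unfolding EJustified_def justified_def step_derives_def Let_def by simp

lemma scoped_EJustified [simp]:
  "scoped n E \<Longrightarrow> scoped n C \<Longrightarrow> scoped n m \<Longrightarrow> scoped n (EJustified E C m)"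
  unfolding EJustified_def Let_def by simp

definition ECertifies :: "prexp \<Rightarrow> prexp \<Rightarrow> prexp \<Rightarrow> prexp \<Rightarrow> prexp" where
  "ECertifies C e xs y =
    EAnd (EBall C (EJustified (ECodeNth (shift 0 C) (Var 0)) (shift 0 C) (Var 0)))
         (EBex C (EEq (EFst (ECodeNth (shift 0 C) (Var 0))) (shift 0 (ECFact e xs y))))"

lemma peval_ECertifies [simp]:
  "peval \<phi> env (ECertifies C e xs y) =
   (if certifies (peval \<phi> env C) (peval \<phi> env e) (peval \<phi> env xs) (peval \<phi> env y) then 1 else 0)"
  by (simp add: ECertifies_def certifies_def valid_cert_def)

lemma scoped_ECertifies [simp]:
  "scoped n (ECertifies C e xs y) \<longleftrightarrow> scoped n C \<and> scoped n e \<and> scoped n xs \<and> scoped n y"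
  by (auto simp: ECertifies_def)

definition prog_curry :: "nat \<Rightarrow> nat \<Rightarrow> nat" where
  "prog_curry e i = prog_comp e [prog_const i, prog_proj 0]"

lemma conv_curry_args: "list_all2 (\<lambda>g v. conv A g [x] v) [prog_const i, prog_proj 0] [i, x]"
  using computes_prog_const[of A i 1, unfolded computes_def, rule_format, of "[x]"]
    computes_prog_proj[of 0 1 A, unfolded computes_def, rule_format, of "[x]"]
  by simp

lemma conv_prog_curry: "conv A (prog_curry e i) [x] y \<longleftrightarrow> conv A e [i, x] y"
  unfolding prog_curry_def
  using conv_prog_comp_elim[OF _ conv_curry_args] conv_prog_comp_intro[OF _ conv_curry_args] by blast

definition EProgConst :: "prexp \<Rightarrow> prexp" where
  "EProgConst x = Rec x (Num prog_zero) (EPair (Num 3) (EPair (Num prog_succ) (Succ (EPair (Var 0) (Num 0)))))"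

lemma peval_EProgConst [simp]: "peval \<phi> env (EProgConst x) = prog_const (peval \<phi> env x)"
proof -
  have "natrec prog_zero
          (\<lambda>j r. peval \<phi> (r # j # env) (EPair (Num 3) (EPair (Num prog_succ) (Succ (EPair (Var 0) (Num 0))))))
          n = prog_const n" for n
    by (induction n) (simp_all add: prog_comp_def)
  then show ?thesis by (simp add: EProgConst_def)
qed

definition ECurry :: "prexp \<Rightarrow> prexp \<Rightarrow> prexp" where
  "ECurry f x =
     EPair (Num 3) (EPair f (Succ (EPair (EProgConst x) (Succ (EPair (Num (prog_proj 0)) (Num 0))))))"

lemma peval_ECurry [simp]: "peval \<phi> env (ECurry f x) = prog_curry (peval \<phi> env f) (peval \<phi> env x)"
  by (simp add: ECurry_def prog_curry_def prog_comp_def)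

lemma scoped_ECurry [simp]: "scoped n (ECurry f x) \<longleftrightarrow> scoped n f \<and> scoped n x"
  by (simp add: ECurry_def EProgConst_def)

lemma prog_curry_computable: "\<exists>q. \<forall>i. conv noOracle q [i] (prog_curry e i)"
proof -
  have zero: "conv noOracle prog_zero [a, b] 0" for a b
    using computes_prog_zero by (simp add: computes_def)
  have "computes noOracle (compile prog_zero 1 (ECurry (Num e) (Var 0))) 1
          (\<lambda>xs. peval (\<lambda>_ _. 0) xs (ECurry (Num e) (Var 0)))"
    by (rule computes_compile) (simp_all add: zero)
  from this[unfolded computes_def, rule_format, of "[i]" for i]
  have "conv noOracle (compile prog_zero 1 (ECurry (Num e) (Var 0))) [i] (prog_curry e i)" for i
    by simp
  then show ?thesis by blast
qed

lemma isPath_rejection_tree: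
  assumes "T = {\<sigma>. \<forall>j\<le>length \<sigma>. run noOracle (length \<sigma>) g (args (take j \<sigma>)) \<noteq> Some 0}"
  shows "isPath T f \<longleftrightarrow> (\<forall>j. \<not> conv noOracle g (args (map f [0..<j])) 0)"
proof
  assume path: "isPath T f"
  show "\<forall>j. \<not> conv noOracle g (args (map f [0..<j])) 0"
  proof (intro allI notI)
    fix j
    assume "conv noOracle g (args (map f [0..<j])) 0"
    then obtain k where k: "run noOracle k g (args (map f [0..<j])) = Some 0"
      unfolding conv_def by blast
    have "map f [0..<max j k] \<in> T" using path unfolding isPath_def by blast
    with k show False
      unfolding assms by (auto simp: take_map dest!: spec[of _ j] run_mono[of _ k _ _ _ "max j k"])
  qed
next
  assume "\<forall>j. \<not> conv noOracle g (args (map f [0..<j])) 0"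
  then show "isPath T f"
    unfolding isPath_def assms by (auto simp: take_map min_def dest: convI)
qed

lemma isPath_Tr: "isPath (Tr g) f \<longleftrightarrow> (\<forall>j. \<not> conv noOracle g [list_encode (map f [0..<j])] 0)"
  by (rule isPath_rejection_tree) (simp add: Tr_def)

lemma isPath_TrP: "isPath (TrP e i) f \<longleftrightarrow> (\<forall>j. \<not> conv noOracle e [i, list_encode (map f [0..<j])] 0)"
  by (rule isPath_rejection_tree) (simp add: TrP_def)

lemma illFounded_Tr_prog_curry: "illFounded (Tr (prog_curry e i)) \<longleftrightarrow> illFounded (TrP e i)"
  unfolding illFounded_def isPath_Tr isPath_TrP conv_prog_curry ..

lemma Pi11_iff_path_rejected:
  assumes "\<forall>g. illFounded (Tr g) \<longrightarrow> isPath (Tr g) (p g)"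
  shows "i \<in> Pi11 e \<longleftrightarrow> (\<exists>j. conv noOracle e [i, list_encode (map (p (prog_curry e i)) [0..<j])] 0)"
proof -
  have "i \<in> Pi11 e \<longleftrightarrow> \<not> illFounded (Tr (prog_curry e i))"
    by (simp add: Pi11_def illFounded_Tr_prog_curry)
  also have "\<dots> \<longleftrightarrow> \<not> isPath (Tr (prog_curry e i)) (p (prog_curry e i))"
    using assms unfolding illFounded_def by blast
  also have "\<dots> \<longleftrightarrow> (\<exists>j. conv noOracle e [i, list_encode (map (p (prog_curry e i)) [0..<j])] 0)"
    by (simp add: isPath_Tr conv_prog_curry)
  finally show ?thesis .
qed

definition EPrefixCode :: "prexp \<Rightarrow> prexp \<Rightarrow> prexp" where
  "EPrefixCode g n =
     Rec n (Num 0) (Succ (EPair (Ora (lift2 g) (EDiff (EDiff (lift2 n) (Var 1)) (Num 1))) (Var 0)))"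

lemma natrec_list_encode_upt:
  "m \<le> n \<Longrightarrow> natrec 0 (\<lambda>j r. Suc (pair (f (n - Suc j)) r)) m = list_encode (map f [n - m..<n])"
proof (induction m)
  case (Suc m)
  then have "[n - Suc m..<n] = (n - Suc m) # [n - m..<n]"
    by (simp add: upt_conv_Cons Suc_diff_Suc)
  with Suc show ?case by simp
qed simp

lemma peval_EPrefixCode [simp]:
  "peval \<phi> env (EPrefixCode g n) = list_encode (map (\<phi> (peval \<phi> env g)) [0..<peval \<phi> env n])"
  using natrec_list_encode_upt[of "peval \<phi> env n" "peval \<phi> env n" "\<phi> (peval \<phi> env g)"]
  by (simp add: EPrefixCode_def)

lemma scoped_EPrefixCode [simp]: "scoped n (EPrefixCode g m) \<longleftrightarrow> scoped n g \<and> scoped n m"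
  by (auto simp: EPrefixCode_def)

text \<open>\<open>ECheck\<close> works in the environment \<open>[w, e, i]\<close>, where \<open>w\<close> pairs the length of a path
  prefix with a certificate.\<close>

definition ECheck :: prexp where
  "ECheck = ENot (ECertifies (ESnd (Var 0)) (Var 1)
     (Succ (EPair (Var 2) (Succ (EPair (EPrefixCode (ECurry (Var 1) (Var 2)) (EFst (Var 0))) (Num 0)))))
     (Num 0))"

lemma scoped_ECheck: "scoped 3 ECheck"
  by (simp add: ECheck_def)

lemma ECheck_zero_iff:
  "(\<exists>w. peval \<phi> [w, e, i] ECheck = 0) \<longleftrightarrow>
   (\<exists>j. conv noOracle e [i, list_encode (map (\<phi> (prog_curry e i)) [0..<j])] 0)"
proof -
  have "peval \<phi> [w, e, i] ECheck = 0 \<longleftrightarrow>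
        certifies (psnd w) e (list_encode [i, list_encode (map (\<phi> (prog_curry e i)) [0..<pfst w])]) 0" for w
    by (simp add: ECheck_def)
  then show ?thesis
    unfolding conv_iff_certifies by (metis fst_conv prod_encode_inverse snd_conv)
qed

lemma W_prog_curry_prog_min:
  assumes "computes (chi D) c 3 F"
  shows "W D (prog_curry (prog_min c) e) = {i. \<exists>w. F [w, e, i] = 0}"
proof -
  have c: "computes (chi D) c (Suc (length [e, i])) F" for i
    using assms by (simp add: numeral_eq_Suc)
  have "(\<exists>y. conv (chi D) (prog_min c) [e, i] y) \<longleftrightarrow> (\<exists>w. F [w, e, i] = 0)" for i
    using conv_prog_min[OF c] conv_prog_min_zero[OF c] by blast
  then show ?thesis
    by (simp add: W_def conv_prog_curry)
qed

theorem mainTheorem4: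
  fixes D :: "nat set"
  assumes "loqHighPaths D"
  shows "\<exists>q. \<forall>e. \<exists>c. conv noOracle q [e] c \<and> W D c = Pi11 e"
proof -
  obtain \<Phi> p where \<Phi>: "\<forall>e n. conv (chi D) \<Phi> [e, n] (p e n)"
    and p: "\<forall>e. illFounded (Tr e) \<longrightarrow> isPath (Tr e) (p e)"
    using assms unfolding loqHighPaths_def by blast
  define c where "c = compile \<Phi> 3 ECheck"
  have "computes (chi D) c 3 (\<lambda>xs. peval p xs ECheck)"
    unfolding c_def by (rule computes_compile) (use \<Phi> scoped_ECheck in blast)+
  then have "W D (prog_curry (prog_min c) e) = Pi11 e" for e
    by (auto simp: W_prog_curry_prog_min ECheck_zero_iff Pi11_iff_path_rejected[OF p])
  moreover obtain q where "\<forall>e. conv noOracle q [e] (prog_curry (prog_min c) e)"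
    using prog_curry_computable by blast
  ultimately show ?thesis by blast
qed

end
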